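(* Let $n$ be a positive integer. Then $Q^{\mathrm{all}} \subseteq Q$, where $Q^{\mathrm{all}} = \{x \in \mathbb{R}^{n\times n} \mid \langle w^G, x\rangle \leqslant \omega(G) \text{ for all graphs } G \text{ with } V(G)\subseteq[n],\ \ x_{ij}\geqslant 0 \text{ for all } i\neq j \in [n]\}$ and $Q = \{x \in \mathbb{R}^{n\times n} \mid \langle 2\,\mathrm{diag}(a) - aa^\intercal, x\rangle \leqslant 1\ \forall a \in \{0,1\}^n\}$.
   Context: $\langle\cdot,\cdot\rangle$ is the Frobenius inner product and $\omega(G)$ the clique number of $G$. For a graph $G$ with $V(G)\subseteq [n]$, the matrix $w^G \in \mathbb{R}^{n\times n}$ is defined by: $w^G_{ii} = 1$ for $i \in V(G)$, $w^G_{ii} = 0$ for $i \in [n]\setminus V(G)$, $w^G_{ij} = w^G_{ji} = -1$ if $i,j \in V(G)$, $i\neq j$ and $ij \notin E(G)$, and $w^G_{ij} = 0$ otherwise. *)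

theory Defs
  imports "HOL-Analysis.Analysis"
begin

text \<open>Index set [n] is the finite type 'n (n = CARD('n) >= 1). Matrices are real^'n^'n.
A simple graph G with V(G) \<subseteq> [n] is a pair (V, E) with E a set of 2-element subsets of V.\<close>

definition simple_graph :: "'n set \<Rightarrow> 'n set set \<Rightarrow> bool" where
  "simple_graph V E \<longleftrightarrow> (\<forall>e\<in>E. \<exists>i j. i \<noteq> j \<and> i \<in> V \<and> j \<in> V \<and> e = {i, j})"

definition is_clique :: "'n set \<Rightarrow> 'n set set \<Rightarrow> 'n set \<Rightarrow> bool" where
  "is_clique V E C \<longleftrightarrow> C \<subseteq> V \<and> (\<forall>i\<in>C. \<forall>j\<in>C. i \<noteq> j \<longrightarrow> {i, j} \<in> E)"

definition clique_number :: "('n::finite) set \<Rightarrow> 'n set set \<Rightarrow> nat" where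
  "clique_number V E = Max {card C | C. is_clique V E C}"

definition wG :: "('n::finite) set \<Rightarrow> 'n set set \<Rightarrow> real^'n^'n" where
  "wG V E = (\<chi> i j. if i = j then (if i \<in> V then 1 else 0)
                    else if i \<in> V \<and> j \<in> V \<and> {i, j} \<notin> E then -1 else 0)"

definition frob :: "real^'n^'n \<Rightarrow> real^'n^'n \<Rightarrow> real" where
  "frob A B = (\<Sum>i\<in>UNIV. \<Sum>j\<in>UNIV. A $ i $ j * B $ i $ j)"

definition Q_all :: "(real^('n::finite)^'n) set" where
  "Q_all = {x. (\<forall>V E. simple_graph V E \<longrightarrow> frob (wG V E) x \<le> real (clique_number V E))
              \<and> (\<forall>i j. i \<noteq> j \<longrightarrow> x $ i $ j \<ge> 0)}"

definition Q_set :: "(real^('n::finite)^'n) set" where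
  "Q_set = {x. \<forall>a :: real^'n. (\<forall>i. a $ i \<in> {0, 1}) \<longrightarrow>
              frob (\<chi> i j. (if i = j then 2 * a $ i else 0) - a $ i * a $ j) x \<le> 1}"

end

theory Submission
  imports Defs
begin

text \<open>For a 0/1 vector \<open>a\<close> with support \<open>S\<close>, the matrix \<open>2 diag(a) - a a\<^sup>T\<close> is exactly
  \<open>w\<^sup>G\<close> for the edgeless graph on \<open>S\<close>, whose clique number is at most 1. So every inequality
  defining \<open>Q\<close> is one of the graph inequalities defining \<open>Q\<^sup>a\<^sup>l\<^sup>l\<close>.\<close>

lemma card_le_1_if_clique_edgeless:
  assumes "is_clique V {} C"
  shows "card C \<le> 1"
proof (cases "finite C")
  case True
  then show ?thesis
    using assms card_le_Suc0_iff_eq[of C] by (auto simp: is_clique_def)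
qed simp

lemma clique_number_edgeless_le_1:
  fixes V :: "('n::finite) set"
  shows "clique_number V {} \<le> 1"
proof -
  have "{card C | C. is_clique V {} C} \<subseteq> {0..CARD('n)}"
    by (auto simp: card_mono)
  then have "finite {card C | C. is_clique V {} C}"
    using finite_subset by blast
  moreover have "is_clique V {} {}"
    by (simp add: is_clique_def)
  moreover have "\<forall>k\<in>{card C | C. is_clique V {} C}. k \<le> 1"
    using card_le_1_if_clique_edgeless by blast
  ultimately show ?thesis
    unfolding clique_number_def by (subst Max_le_iff) auto
qed

lemma wG_edgeless_support:
  fixes a :: "real^('n::finite)"
  assumes "\<forall>i. a $ i \<in> {0, 1}"
  shows "wG {i. a $ i = 1} {} = (\<chi> i j. (if i = j then 2 * a $ i else 0) - a $ i * a $ j)"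
  unfolding vec_eq_iff wG_def
proof (intro allI)
  fix i j
  have "a $ i = 0 \<or> a $ i = 1" "a $ j = 0 \<or> a $ j = 1"
    using assms by auto
  then show "(\<chi> i j. if i = j then if i \<in> {i. a $ i = 1} then 1 else 0
      else if i \<in> {i. a $ i = 1} \<and> j \<in> {i. a $ i = 1} \<and> {i, j} \<notin> {} then - 1 else 0) $ i $ j
    = (\<chi> i j. (if i = j then 2 * a $ i else 0) - a $ i * a $ j) $ i $ j"
    by (cases "i = j") auto
qed

theorem lemma7:
  shows "(Q_all :: (real^('n::finite)^'n) set) \<subseteq> Q_set"
proof
  fix x :: "real^'n^'n"
  assume "x \<in> Q_all"
  then have graph_ineq: "\<And>V E. simple_graph V E \<Longrightarrow> frob (wG V E) x \<le> real (clique_number V E)"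
    by (auto simp: Q_all_def)
  show "x \<in> Q_set" unfolding Q_set_def
  proof (intro CollectI allI impI)
    fix a :: "real^'n"
    assume a01: "\<forall>i. a $ i \<in> {0, 1}"
    define S where "S = {i. a $ i = 1}"
    have "simple_graph S {}"
      by (simp add: simple_graph_def)
    then have "frob (wG S {}) x \<le> real (clique_number S {})"
      by (rule graph_ineq)
    also have "\<dots> \<le> 1"
      using clique_number_edgeless_le_1[of S] by simp
    finally show "frob (\<chi> i j. (if i = j then 2 * a $ i else 0) - a $ i * a $ j) x \<le> 1"
      using wG_edgeless_support[OF a01] by (simp add: S_def)
  qed
qed

end
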